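(* Let $\kappa$ be an uncountable regular cardinal and let $\mathcal{I}$ be a $\kappa$-complete proper ideal on $\kappa$ containing every bounded subset of $\kappa$. Then $\mathcal{I}$ has the approximation property if and only if there is a partition $\{C_\alpha:\alpha<\kappa\}$ of $\kappa$ such that, setting $D_\alpha=\bigcup_{\beta\le\alpha}C_\beta$, the family $\{D_\alpha:\alpha<\kappa\}$ is a basis for $\mathcal{I}$.
   Context: A basis for $\mathcal{I}$ is a family $\mathcal{B}\subseteq\mathcal{I}$ such that every $D\in\mathcal{I}$ is contained in some member of $\mathcal{B}$. $\mathcal{I}$ has the approximation property if there is a sequence $\langle B_\alpha:\alpha<\kappa\rangle$ of members of $\mathcal{I}$ which is strictly increasing ($B_\alpha\subsetneq B_\beta$ for $\alpha<\beta$) and continuous ($B_\alpha=\bigcup_{\beta<\alpha}B_\beta$ for limit $\alpha$), with $B_0=\emptyset$, and such that for every $B\in\mathcal{I}$ there is $\alpha<\kappa$ with $B\subsetneq B_\alpha$. *)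

theory Defs
  imports Main "HOL-Library.Countable_Set"
begin

unbundle cardinal_syntax

text \<open>A cardinal kappa is represented by a cardinal order r (an initial ordinal,
  Card_order r); the elements of kappa (the ordinals below kappa) are Field r,
  ordered by r.\<close>

definition ord_less :: "'a rel \<Rightarrow> 'a \<Rightarrow> 'a \<Rightarrow> bool" where
  "ord_less r a b \<longleftrightarrow> (a, b) \<in> r \<and> a \<noteq> b"

definition is_limit :: "'a rel \<Rightarrow> 'a \<Rightarrow> bool" where
  "is_limit r a \<longleftrightarrow> a \<in> Field r \<and> (\<exists>b. ord_less r b a)
     \<and> (\<forall>b. ord_less r b a \<longrightarrow> (\<exists>c. ord_less r b c \<and> ord_less r c a))"

definition is_ideal_on :: "'a rel \<Rightarrow> 'a set set \<Rightarrow> bool" where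
  "is_ideal_on r I \<longleftrightarrow> I \<subseteq> Pow (Field r) \<and> {} \<in> I
     \<and> (\<forall>A\<in>I. \<forall>B. B \<subseteq> A \<longrightarrow> B \<in> I)
     \<and> (\<forall>A\<in>I. \<forall>B\<in>I. A \<union> B \<in> I)"

definition proper_ideal_on :: "'a rel \<Rightarrow> 'a set set \<Rightarrow> bool" where
  "proper_ideal_on r I \<longleftrightarrow> is_ideal_on r I \<and> Field r \<notin> I"

definition kappa_complete :: "'a rel \<Rightarrow> 'a set set \<Rightarrow> bool" where
  "kappa_complete r I \<longleftrightarrow> (\<forall>F. F \<subseteq> I \<and> |F| <o r \<longrightarrow> \<Union>F \<in> I)"

definition bounded_subset :: "'a rel \<Rightarrow> 'a set \<Rightarrow> bool" where
  "bounded_subset r B \<longleftrightarrow> B \<subseteq> Field r \<and> (\<exists>a\<in>Field r. \<forall>b\<in>B. ord_less r b a)"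

definition is_basis :: "'a set set \<Rightarrow> 'a set set \<Rightarrow> bool" where
  "is_basis I Bs \<longleftrightarrow> Bs \<subseteq> I \<and> (\<forall>D\<in>I. \<exists>B\<in>Bs. D \<subseteq> B)"

definition approximation_property :: "'a rel \<Rightarrow> 'a set set \<Rightarrow> bool" where
  "approximation_property r I \<longleftrightarrow> (\<exists>B :: 'a \<Rightarrow> 'a set.
      (\<forall>a\<in>Field r. B a \<in> I)
    \<and> (\<forall>a\<in>Field r. \<forall>b\<in>Field r. ord_less r a b \<longrightarrow> B a \<subset> B b)
    \<and> (\<forall>a. is_limit r a \<longrightarrow> B a = (\<Union>b\<in>{b. ord_less r b a}. B b))
    \<and> (\<forall>a\<in>Field r. (\<forall>b\<in>Field r. (a, b) \<in> r) \<longrightarrow> B a = {})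
    \<and> (\<forall>X\<in>I. \<exists>a\<in>Field r. X \<subset> B a))"

definition is_partition_of :: "'a rel \<Rightarrow> ('a \<Rightarrow> 'a set) \<Rightarrow> bool" where
  "is_partition_of r C \<longleftrightarrow> (\<forall>a\<in>Field r. C a \<noteq> {} \<and> C a \<subseteq> Field r)
     \<and> (\<forall>a\<in>Field r. \<forall>b\<in>Field r. a \<noteq> b \<longrightarrow> C a \<inter> C b = {})
     \<and> (\<Union>a\<in>Field r. C a) = Field r"

end

theory Submission
  imports Defs
begin

text \<open>Given the partition, the strict unions \<open>B\<^sub>\<alpha> = \<Union>\<^sub>\<beta>\<^sub><\<^sub>\<alpha> C\<^sub>\<beta>\<close> form the required
  sequence: the cells are nonempty and disjoint, so \<open>B\<close> is strictly increasing, and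
  \<open>D\<^sub>\<alpha> \<subseteq> B\<^sub>\<alpha>\<^sub>+\<^sub>1 \<subset> B\<^sub>\<alpha>\<^sub>+\<^sub>2\<close>.  Conversely, the layers \<open>C\<^sub>\<alpha> = B\<^sub>\<alpha>\<^sub>+\<^sub>1 - B\<^sub>\<alpha>\<close> of an
  approximating sequence partition \<open>\<kappa>\<close>: by continuity and \<open>B\<^sub>0 = {}\<close> the least stage at
  which a point enters is a successor, so each point of \<open>B\<^sub>\<alpha>\<close> lies in a layer below \<open>\<alpha>\<close>.
  Hence \<open>B\<^sub>\<alpha> \<subseteq> D\<^sub>\<alpha> \<subseteq> B\<^sub>\<alpha>\<^sub>+\<^sub>1\<close>, and the \<open>D\<^sub>\<alpha>\<close> form a basis.\<close>

definition cumulative_union :: "'a rel \<Rightarrow> ('a \<Rightarrow> 'b set) \<Rightarrow> 'a \<Rightarrow> 'b set" where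
  "cumulative_union r C a = (\<Union>b\<in>{b \<in> Field r. (b, a) \<in> r}. C b)"

definition strict_cumulative_union :: "'a rel \<Rightarrow> ('a \<Rightarrow> 'b set) \<Rightarrow> 'a \<Rightarrow> 'b set" where
  "strict_cumulative_union r C a = (\<Union>b\<in>{b \<in> Field r. ord_less r b a}. C b)"

text \<open>The layer \<open>B\<^sub>a\<^sub>+\<^sub>1 - B\<^sub>a\<close>, phrased without the successor of \<open>a\<close>.\<close>
definition layer :: "'a rel \<Rightarrow> ('a \<Rightarrow> 'a set) \<Rightarrow> 'a \<Rightarrow> 'a set" where
  "layer r B a = {x \<in> Field r. x \<notin> B a \<and> (\<forall>b. ord_less r a b \<longrightarrow> x \<in> B b)}"

lemma ideal_downward_closed: "is_ideal_on r I \<Longrightarrow> A \<in> I \<Longrightarrow> B \<subseteq> A \<Longrightarrow> B \<in> I"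
  unfolding is_ideal_on_def by blast

lemma ideal_subset_Field: "is_ideal_on r I \<Longrightarrow> A \<in> I \<Longrightarrow> A \<subseteq> Field r"
  unfolding is_ideal_on_def by blast

lemma strict_cumulative_union_subset_cumulative_union:
  "strict_cumulative_union r C a \<subseteq> cumulative_union r C a"
  unfolding strict_cumulative_union_def cumulative_union_def ord_less_def by blast

lemma mono_if_strict_mono:
  assumes "\<And>a b. ord_less r a b \<Longrightarrow> B a \<subset> B b" and "(a, b) \<in> r"
  shows "B a \<subseteq> B b"
  using assms unfolding ord_less_def by (cases "a = b") blast+

context wo_rel
begin

lemma ord_less_Field: "ord_less r a b \<Longrightarrow> a \<in> Field r \<and> b \<in> Field r"
  unfolding ord_less_def by (blast intro: FieldI1 FieldI2)

lemma ord_less_le_trans: "ord_less r a b \<Longrightarrow> (b, c) \<in> r \<Longrightarrow> ord_less r a c"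
  using TRANS ANTISYM unfolding ord_less_def trans_def antisym_def by blast

lemma le_ord_less_trans: "(a, b) \<in> r \<Longrightarrow> ord_less r b c \<Longrightarrow> ord_less r a c"
  using TRANS ANTISYM unfolding ord_less_def trans_def antisym_def by blast

lemma ord_less_trans: "ord_less r a b \<Longrightarrow> ord_less r b c \<Longrightarrow> ord_less r a c"
  using ord_less_le_trans unfolding ord_less_def by blast

lemma not_le_iff_ord_less:
  "a \<in> Field r \<Longrightarrow> b \<in> Field r \<Longrightarrow> (a, b) \<notin> r \<longleftrightarrow> ord_less r b a"
  using TOTALS ANTISYM unfolding ord_less_def antisym_def by blast

lemma exists_successor:
  assumes "ord_less r a b"
  shows "\<exists>s. ord_less r a s \<and> (\<forall>c. ord_less r a c \<longrightarrow> (s, c) \<in> r)"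
proof -
  have "b \<in> AboveS {a}" and "{a} \<subseteq> Field r"
    using assms ord_less_Field[OF assms] by (auto simp: AboveS_def ord_less_def)
  then have "suc {a} \<in> AboveS {a}"
    using suc_AboveS by blast
  moreover have "(suc {a}, c) \<in> r" if "ord_less r a c" for c
    using that ord_less_Field[OF that] by (intro suc_least_AboveS) (auto simp: AboveS_def ord_less_def)
  ultimately show ?thesis
    by (auto simp: AboveS_def ord_less_def)
qed

lemma exists_predecessor_if_not_limit:
  assumes "ord_less r b a" and "\<not> is_limit r a"
  shows "\<exists>d. ord_less r d a \<and> (\<forall>c. ord_less r d c \<longrightarrow> (a, c) \<in> r)"
proof -
  have a: "a \<in> Field r"
    using ord_less_Field[OF assms(1)] by blast
  then obtain d where da: "ord_less r d a" and gap: "\<not> (\<exists>c. ord_less r d c \<and> ord_less r c a)"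
    using assms unfolding is_limit_def by blast
  have "(a, c) \<in> r" if "ord_less r d c" for c
    using gap that a ord_less_Field[OF that] not_le_iff_ord_less by blast
  with da show ?thesis
    by blast
qed

lemma strict_cumulative_union_strict_mono:
  assumes partition: "is_partition_of r C" and ab: "ord_less r a b"
  shows "strict_cumulative_union r C a \<subset> strict_cumulative_union r C b"
proof -
  have a: "a \<in> Field r"
    using ord_less_Field[OF ab] by blast
  have "strict_cumulative_union r C a \<subseteq> strict_cumulative_union r C b"
    unfolding strict_cumulative_union_def using ord_less_trans[OF _ ab] by blast
  moreover have "C a \<subseteq> strict_cumulative_union r C b"
    unfolding strict_cumulative_union_def using a ab by blast
  moreover have "C a \<inter> strict_cumulative_union r C a = {}"
    using partition a unfolding strict_cumulative_union_def is_partition_of_def ord_less_def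
    by blast
  moreover have "C a \<noteq> {}"
    using partition a unfolding is_partition_of_def by blast
  ultimately show ?thesis
    by blast
qed

lemma strict_cumulative_union_limit:
  assumes "is_limit r a"
  shows "strict_cumulative_union r C a = (\<Union>b\<in>{b. ord_less r b a}. strict_cumulative_union r C b)"
  using assms ord_less_trans unfolding strict_cumulative_union_def is_limit_def by blast

lemma strict_cumulative_union_least:
  assumes "\<forall>b\<in>Field r. (a, b) \<in> r"
  shows "strict_cumulative_union r C a = {}"
  using assms ANTISYM unfolding strict_cumulative_union_def ord_less_def antisym_def by blast

lemma cumulative_union_subset_strict_cumulative_union:
  assumes "ord_less r a s"
  shows "cumulative_union r C a \<subseteq> strict_cumulative_union r C s"
  using le_ord_less_trans[OF _ assms]
  unfolding cumulative_union_def strict_cumulative_union_def by blast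

lemma layer_disjoint:
  assumes "a \<in> Field r" and "b \<in> Field r" and "a \<noteq> b"
  shows "layer r B a \<inter> layer r B b = {}"
proof -
  have "ord_less r a b \<or> ord_less r b a"
    using assms TOTALS unfolding ord_less_def by blast
  then show ?thesis
    unfolding layer_def by blast
qed

lemma layer_nonempty:
  assumes strict_mono: "\<And>a b. ord_less r a b \<Longrightarrow> B a \<subset> B b"
    and B_Field: "\<And>a. a \<in> Field r \<Longrightarrow> B a \<subseteq> Field r"
    and "ord_less r a b"
  shows "layer r B a \<noteq> {}"
proof -
  obtain s where as: "ord_less r a s" and least: "\<And>c. ord_less r a c \<Longrightarrow> (s, c) \<in> r"
    using exists_successor[OF assms(3)] by blast
  then obtain x where x: "x \<in> B s" "x \<notin> B a"
    using strict_mono by blast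
  have "x \<in> Field r"
    using x B_Field ord_less_Field[OF as] by blast
  moreover have "x \<in> B c" if "ord_less r a c" for c
    using mono_if_strict_mono[where B = B, OF strict_mono least[OF that]] x by blast
  ultimately show ?thesis
    using x unfolding layer_def by blast
qed

text \<open>The least stage containing \<open>x\<close> is neither the bottom nor a limit, so it is the
  successor of some \<open>d\<close>, and \<open>x\<close> lies in the layer of \<open>d\<close>.\<close>
lemma mem_layer_below:
  assumes strict_mono: "\<And>a b. ord_less r a b \<Longrightarrow> B a \<subset> B b"
    and continuous: "\<forall>a. is_limit r a \<longrightarrow> B a = (\<Union>b\<in>{b. ord_less r b a}. B b)"
    and bottom: "\<forall>a\<in>Field r. (\<forall>b\<in>Field r. (a, b) \<in> r) \<longrightarrow> B a = {}"
    and a: "a \<in> Field r" and xa: "x \<in> B a" and x: "x \<in> Field r"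
  shows "\<exists>d. ord_less r d a \<and> x \<in> layer r B d"
proof -
  define S where "S = {g \<in> Field r. x \<in> B g}"
  define g where "g = minim S"
  have S: "S \<subseteq> Field r" "a \<in> S"
    using a xa unfolding S_def by auto
  have "g \<in> S"
    unfolding g_def using minim_in[OF S(1)] S(2) by blast
  then have g: "g \<in> Field r" "x \<in> B g"
    unfolding S_def by auto
  have g_least: "(g, c) \<in> r" if "c \<in> Field r" "x \<in> B c" for c
    using minim_least[OF S(1)] that unfolding g_def S_def by blast
  have not_below_g: "x \<notin> B c" if "ord_less r c g" for c
    using g_least ord_less_Field[OF that] that not_le_iff_ord_less g(1) by blast
  obtain b where "ord_less r b g"
    using bottom g not_le_iff_ord_less by blast
  moreover have "\<not> is_limit r g"
    using continuous g(2) not_below_g by blast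
  ultimately obtain d where dg: "ord_less r d g" and succ: "\<And>c. ord_less r d c \<Longrightarrow> (g, c) \<in> r"
    using exists_predecessor_if_not_limit by blast
  have "x \<in> B c" if "ord_less r d c" for c
    using mono_if_strict_mono[where B = B, OF strict_mono succ[OF that]] g(2) by blast
  then have "x \<in> layer r B d"
    using x not_below_g[OF dg] unfolding layer_def by blast
  moreover have "ord_less r d a"
    using ord_less_le_trans[OF dg g_least[OF a xa]] .
  ultimately show ?thesis
    by blast
qed

lemma cumulative_union_layer_subset:
  assumes "ord_less r a s"
  shows "cumulative_union r (layer r B) a \<subseteq> B s"
  using le_ord_less_trans[OF _ assms] unfolding cumulative_union_def layer_def by blast

lemma subset_cumulative_union_layer:
  assumes strict_mono: "\<And>a b. ord_less r a b \<Longrightarrow> B a \<subset> B b"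
    and continuous: "\<forall>a. is_limit r a \<longrightarrow> B a = (\<Union>b\<in>{b. ord_less r b a}. B b)"
    and bottom: "\<forall>a\<in>Field r. (\<forall>b\<in>Field r. (a, b) \<in> r) \<longrightarrow> B a = {}"
    and "B a \<subseteq> Field r" and "a \<in> Field r"
  shows "B a \<subseteq> cumulative_union r (layer r B) a"
proof
  fix x
  assume "x \<in> B a"
  then obtain d where "ord_less r d a" "x \<in> layer r B d"
    using mem_layer_below[OF strict_mono continuous bottom \<open>a \<in> Field r\<close>] assms(4) by blast
  then show "x \<in> cumulative_union r (layer r B) a"
    using ord_less_Field unfolding cumulative_union_def ord_less_def by blast
qed

lemma layer_partition:
  assumes unbounded: "\<And>a. a \<in> Field r \<Longrightarrow> \<exists>b. ord_less r a b"
    and strict_mono: "\<And>a b. ord_less r a b \<Longrightarrow> B a \<subset> B b"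
    and continuous: "\<forall>a. is_limit r a \<longrightarrow> B a = (\<Union>b\<in>{b. ord_less r b a}. B b)"
    and bottom: "\<forall>a\<in>Field r. (\<forall>b\<in>Field r. (a, b) \<in> r) \<longrightarrow> B a = {}"
    and B_Field: "\<And>a. a \<in> Field r \<Longrightarrow> B a \<subseteq> Field r"
    and covering: "\<And>x. x \<in> Field r \<Longrightarrow> \<exists>a\<in>Field r. x \<in> B a"
  shows "is_partition_of r (layer r B)"
  unfolding is_partition_of_def
proof (intro conjI ballI impI)
  show "layer r B a \<noteq> {}" if "a \<in> Field r" for a
    using unbounded[OF that] layer_nonempty[where B = B, OF strict_mono B_Field] by blast
  show "layer r B a \<subseteq> Field r" for a
    unfolding layer_def by blast
  show "layer r B a \<inter> layer r B b = {}" if "a \<in> Field r" "b \<in> Field r" "a \<noteq> b" for a b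
    using layer_disjoint[OF that] .
  have "x \<in> (\<Union>a\<in>Field r. layer r B a)" if x: "x \<in> Field r" for x
  proof -
    obtain a where "a \<in> Field r" "x \<in> B a"
      using covering[OF x] by blast
    then obtain d where "ord_less r d a" "x \<in> layer r B d"
      using mem_layer_below[OF strict_mono continuous bottom _ _ x] by blast
    then show ?thesis
      using ord_less_Field by blast
  qed
  then show "(\<Union>a\<in>Field r. layer r B a) = Field r"
    unfolding layer_def by blast
qed

lemma approximation_property_if_partition_basis:
  assumes unbounded: "\<And>a. a \<in> Field r \<Longrightarrow> \<exists>b. ord_less r a b"
    and ideal: "is_ideal_on r I"
    and partition: "is_partition_of r C"
    and basis: "is_basis I (cumulative_union r C ` Field r)"
  shows "approximation_property r I"
  unfolding approximation_property_def
proof (intro exI[of _ "strict_cumulative_union r C"] conjI ballI allI impI)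
  show "strict_cumulative_union r C a \<in> I" if "a \<in> Field r" for a
  proof (rule ideal_downward_closed[OF ideal])
    show "cumulative_union r C a \<in> I"
      using that basis unfolding is_basis_def by blast
  qed (rule strict_cumulative_union_subset_cumulative_union)
  show "strict_cumulative_union r C a \<subset> strict_cumulative_union r C b" if "ord_less r a b" for a b
    using strict_cumulative_union_strict_mono[OF partition that] .
  show "strict_cumulative_union r C a = (\<Union>b\<in>{b. ord_less r b a}. strict_cumulative_union r C b)"
    if "is_limit r a" for a
    using strict_cumulative_union_limit[OF that] .
  show "strict_cumulative_union r C a = {}" if "\<forall>b\<in>Field r. (a, b) \<in> r" for a
    using strict_cumulative_union_least[OF that] .
  fix X
  assume "X \<in> I"
  then obtain a where "a \<in> Field r" "X \<subseteq> cumulative_union r C a"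
    using basis unfolding is_basis_def by blast
  obtain s where as: "ord_less r a s"
    using unbounded[OF \<open>a \<in> Field r\<close>] by blast
  obtain t where st: "ord_less r s t"
    using unbounded ord_less_Field[OF as] by blast
  have "X \<subseteq> strict_cumulative_union r C s"
    using \<open>X \<subseteq> cumulative_union r C a\<close> cumulative_union_subset_strict_cumulative_union[OF as]
    by (rule order_trans)
  also have "\<dots> \<subset> strict_cumulative_union r C t"
    using strict_cumulative_union_strict_mono[OF partition st] .
  finally show "\<exists>a\<in>Field r. X \<subset> strict_cumulative_union r C a"
    using ord_less_Field[OF st] by blast
qed

lemma partition_basis_if_approximation_property:
  assumes unbounded: "\<And>a. a \<in> Field r \<Longrightarrow> \<exists>b. ord_less r a b"
    and ideal: "is_ideal_on r I"
    and singletons: "\<And>x. x \<in> Field r \<Longrightarrow> {x} \<in> I"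
    and "approximation_property r I"
  shows "\<exists>C. is_partition_of r C \<and> is_basis I (cumulative_union r C ` Field r)"
proof -
  obtain B where
    B_I: "\<forall>a\<in>Field r. B a \<in> I" and
    strict: "\<forall>a\<in>Field r. \<forall>b\<in>Field r. ord_less r a b \<longrightarrow> B a \<subset> B b" and
    continuous: "\<forall>a. is_limit r a \<longrightarrow> B a = (\<Union>b\<in>{b. ord_less r b a}. B b)" and
    bottom: "\<forall>a\<in>Field r. (\<forall>b\<in>Field r. (a, b) \<in> r) \<longrightarrow> B a = {}" and
    cofinal: "\<forall>X\<in>I. \<exists>a\<in>Field r. X \<subset> B a"
    using assms(4) unfolding approximation_property_def by (elim exE conjE) (rule that)
  have strict_mono: "B a \<subset> B b" if "ord_less r a b" for a b
    using strict ord_less_Field[OF that] that by blast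
  have B_Field: "B a \<subseteq> Field r" if "a \<in> Field r" for a
    using ideal_subset_Field[OF ideal B_I[rule_format, OF that]] .
  have covering: "\<exists>a\<in>Field r. x \<in> B a" if "x \<in> Field r" for x
    using cofinal[rule_format, OF singletons[OF that]] by blast
  have basis: "is_basis I (cumulative_union r (layer r B) ` Field r)"
    unfolding is_basis_def
  proof (intro conjI image_subsetI ballI)
    fix a
    assume a: "a \<in> Field r"
    obtain s where as: "ord_less r a s"
      using unbounded[OF a] by blast
    show "cumulative_union r (layer r B) a \<in> I"
      using ideal_downward_closed[OF ideal B_I[rule_format] cumulative_union_layer_subset[where B = B, OF as]]
        ord_less_Field[OF as]
      by blast
  next
    fix X
    assume "X \<in> I"
    then obtain a where a: "a \<in> Field r" "X \<subset> B a"
      using cofinal by blast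
    then have "X \<subseteq> cumulative_union r (layer r B) a"
      using subset_cumulative_union_layer[OF strict_mono continuous bottom B_Field[OF a(1)] a(1)] by blast
    with a(1) show "\<exists>D\<in>cumulative_union r (layer r B) ` Field r. X \<subseteq> D"
      by blast
  qed
  show ?thesis
    using layer_partition[OF unbounded strict_mono continuous bottom B_Field covering] basis by blast
qed

end

theorem lemma2p2:
  fixes r :: "'a rel" and I :: "'a set set"
  assumes "Card_order r"
    and "\<not> countable (Field r)"
    and "regularCard r"
    and "proper_ideal_on r I"
    and "kappa_complete r I"
    and "\<forall>B. bounded_subset r B \<longrightarrow> B \<in> I"
  shows "approximation_property r I \<longleftrightarrow>
    (\<exists>C :: 'a \<Rightarrow> 'a set. is_partition_of r C \<and>
       is_basis I ((\<lambda>a. \<Union>b\<in>{b \<in> Field r. (b, a) \<in> r}. C b) ` Field r))"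
proof -
  interpret wo_rel r
    using assms(1) by (simp add: card_order_on_def wo_rel_def)
  have "infinite (Field r)"
    using assms(2) countable_finite by blast
  then have unbounded: "\<exists>b. ord_less r a b" if "a \<in> Field r" for a
    using infinite_Card_order_limit[OF assms(1) _ that] unfolding ord_less_def by blast
  have ideal: "is_ideal_on r I"
    using assms(4) unfolding proper_ideal_on_def by blast
  have singletons: "{x} \<in> I" if "x \<in> Field r" for x
    using assms(6) unbounded[OF that] ord_less_Field that unfolding bounded_subset_def by blast
  have cumulative: "(\<lambda>a. \<Union>b\<in>{b \<in> Field r. (b, a) \<in> r}. C b) = cumulative_union r C"
    for C :: "'a \<Rightarrow> 'a set"
    by (simp add: cumulative_union_def fun_eq_iff)
  show ?thesis
    unfolding cumulative
    using approximation_property_if_partition_basis[OF unbounded ideal]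
      partition_basis_if_approximation_property[OF unbounded ideal singletons]
    by blast
qed

end
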